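(* Let $(\mathcal{C},\mathbb{E},\mathfrak{s})$ satisfy (ET1) and (ET2), and let $\mathcal{I}$ be a special precovering ideal of $\mathcal{C}$. If $\mathcal{I}^{\perp_{\mathbb{E}}}$ is an object ideal, then $\mathcal{I}$ is an object-special precovering ideal.
   Context: $\mathcal{C}$ additive, $\mathbb{E}:\mathcal{C}^{\mathrm{op}}\times\mathcal{C}\to\mathrm{Ab}$ biadditive (ET1); for $\delta\in\mathbb{E}(C,A)$, $a:A\to A'$, $c:C'\to C$ put $a_\star\delta=\mathbb{E}(C,a)(\delta)$, $c^\star\delta=\mathbb{E}(c,A)(\delta)$. (ET2): $\mathfrak{s}$ is an additive realization (Nakaoka–Palu): each $\delta\in\mathbb{E}(C,A)$ is assigned an equivalence class of sequences $A\to B\to C$ (up to isomorphism of middle terms), $0$ is realized by split sequences, realization respects direct sums, and if $a_\star\delta=c^\star\delta'$ there is a middle map making the realizing sequences commute. Realized pairs are $\mathbb{E}$-triangles $A\to B\to C\overset{\delta}{\dashrightarrow}$; commuting triples $(a,b,c)$ with $a_\star\delta=c^\star\delta'$ are morphisms of $\mathbb{E}$-triangles. Ideal: class of morphisms with zeros, closed under sums and two-sided composition. $\mathcal{I}^{\perp_{\mathbb{E}}}=\{g:A\to Y\mid m^\star g_\star\delta=0\ \forall m\in\mathcal{I},\,m:X\to C,\ \forall\delta\in\mathbb{E}(C,A)\}$. For a class $\mathcal{K}$ of morphisms, $\mathrm{Ob}(\mathcal{K})=\{A\mid \mathrm{id}_A\in\mathcal{K}\}$ and $\langle\mathcal{K}\rangle$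 is the smallest ideal containing $\mathcal{K}$; $\mathcal{K}$ is an object ideal if $\mathcal{K}=\langle\mathrm{Ob}(\mathcal{K})\rangle$ (i.e. it consists of the morphisms factoring through objects of $\mathrm{Ob}(\mathcal{K})$); write $A\in\mathcal{K}$ for $A\in\mathrm{Ob}(\mathcal{K})$. A special $\mathcal{I}$-precover of $C$: $i:X\to C$ in $\mathcal{I}$ with $\mathbb{E}$-triangles $A\to B\to C\overset{\delta}{\dashrightarrow}$, $A'\to X\xrightarrow{i}C\overset{\delta'}{\dashrightarrow}$ and a morphism $(j,b,\mathrm{id}_C)$ between them, $j\in\mathcal{I}^{\perp_{\mathbb{E}}}$; $\mathcal{I}$ is special precovering if every object has one. An object-special $\mathcal{I}$-precover of $C$: $i:X\to C$ in $\mathcal{I}$ for which there is an $\mathbb{E}$-triangle $A\to X\xrightarrow{i}C\overset{\delta}{\dashrightarrow}$ with $A\in\mathcal{I}^{\perp_{\mathbb{E}}}$; $\mathcal{I}$ is object-special precovering if every object has one. *)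

theory Defs
  imports "HOL-Algebra.Group"
begin

text \<open>HomG X A B : the abelian group Hom(A,B) (group law written multiplicatively
     in HOL-Algebra style; its unit is the zero morphism).
  Comp X g f : composition g o f.
  ExtG X C A : the abelian group E(C,A).
  Emap X c a : the map E(c,a) : E(C,A) -> E(C',A') for c : C' -> C, a : A -> A'.
  Rlz X C A d x y : the sequence A -x-> B -y-> C belongs to the class s(d),
     for d in E(C,A).\<close>

record ('o,'m,'e) etcat =
  Dom  :: "'m \<Rightarrow> 'o"
  Cod  :: "'m \<Rightarrow> 'o"
  HomG :: "'o \<Rightarrow> 'o \<Rightarrow> 'm monoid"
  Comp :: "'m \<Rightarrow> 'm \<Rightarrow> 'm"
  Ide  :: "'o \<Rightarrow> 'm"
  ExtG :: "'o \<Rightarrow> 'o \<Rightarrow> 'e monoid"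
  Emap :: "'m \<Rightarrow> 'm \<Rightarrow> 'e \<Rightarrow> 'e"
  Rlz  :: "'o \<Rightarrow> 'o \<Rightarrow> 'e \<Rightarrow> 'm \<Rightarrow> 'm \<Rightarrow> bool"

abbreviation Hom :: "('o,'m,'e) etcat \<Rightarrow> 'o \<Rightarrow> 'o \<Rightarrow> 'm set" where
  "Hom X A B \<equiv> carrier (HomG X A B)"

abbreviation Ext :: "('o,'m,'e) etcat \<Rightarrow> 'o \<Rightarrow> 'o \<Rightarrow> 'e set" where
  "Ext X C A \<equiv> carrier (ExtG X C A)"

definition push :: "('o,'m,'e) etcat \<Rightarrow> 'o \<Rightarrow> 'm \<Rightarrow> 'e \<Rightarrow> 'e" where
  "push X C a d = Emap X (Ide X C) a d"

definition pull :: "('o,'m,'e) etcat \<Rightarrow> 'o \<Rightarrow> 'm \<Rightarrow> 'e \<Rightarrow> 'e" where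
  "pull X A c d = Emap X c (Ide X A) d"

definition is_biprod :: "('o,'m,'e) etcat \<Rightarrow> 'o \<Rightarrow> 'o \<Rightarrow> 'o \<Rightarrow> 'm \<Rightarrow> 'm \<Rightarrow> 'm \<Rightarrow> 'm \<Rightarrow> bool" where
  "is_biprod X A B P iA iB pA pB \<longleftrightarrow>
     iA \<in> Hom X A P \<and> iB \<in> Hom X B P \<and> pA \<in> Hom X P A \<and> pB \<in> Hom X P B \<and>
     Comp X pA iA = Ide X A \<and> Comp X pB iB = Ide X B \<and>
     Comp X iA pA \<otimes>\<^bsub>HomG X P P\<^esub> Comp X iB pB = Ide X P"

definition seq_equiv :: "('o,'m,'e) etcat \<Rightarrow> 'o \<Rightarrow> 'o \<Rightarrow> 'm \<Rightarrow> 'm \<Rightarrow> 'm \<Rightarrow> 'm \<Rightarrow> bool" where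
  "seq_equiv X A C x y x' y' \<longleftrightarrow>
     (\<exists>B B' b b'. x \<in> Hom X A B \<and> y \<in> Hom X B C \<and> x' \<in> Hom X A B' \<and> y' \<in> Hom X B' C \<and>
        b \<in> Hom X B B' \<and> b' \<in> Hom X B' B \<and>
        Comp X b' b = Ide X B \<and> Comp X b b' = Ide X B' \<and>
        Comp X b x = x' \<and> Comp X y' b = y)"

definition additive_cat :: "('o,'m,'e) etcat \<Rightarrow> bool" where
  "additive_cat X \<longleftrightarrow>
    (\<forall>A B. comm_group (HomG X A B)) \<and>
    (\<forall>A B f. f \<in> Hom X A B \<longrightarrow> Dom X f = A \<and> Cod X f = B) \<and>
    (\<forall>A B C f g. f \<in> Hom X A B \<longrightarrow> g \<in> Hom X B C \<longrightarrow> Comp X g f \<in> Hom X A C) \<and>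
    (\<forall>A B C D f g h. f \<in> Hom X A B \<longrightarrow> g \<in> Hom X B C \<longrightarrow> h \<in> Hom X C D \<longrightarrow>
        Comp X h (Comp X g f) = Comp X (Comp X h g) f) \<and>
    (\<forall>A. Ide X A \<in> Hom X A A) \<and>
    (\<forall>A B f. f \<in> Hom X A B \<longrightarrow> Comp X (Ide X B) f = f \<and> Comp X f (Ide X A) = f) \<and>
    (\<forall>A B C f g g'. f \<in> Hom X A B \<longrightarrow> g \<in> Hom X B C \<longrightarrow> g' \<in> Hom X B C \<longrightarrow>
        Comp X (g \<otimes>\<^bsub>HomG X B C\<^esub> g') f = Comp X g f \<otimes>\<^bsub>HomG X A C\<^esub> Comp X g' f) \<and>
    (\<forall>A B C f f' g. f \<in> Hom X A B \<longrightarrow> f' \<in> Hom X A B \<longrightarrow> g \<in> Hom X B C \<longrightarrow>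
        Comp X g (f \<otimes>\<^bsub>HomG X A B\<^esub> f') = Comp X g f \<otimes>\<^bsub>HomG X A C\<^esub> Comp X g f') \<and>
    (\<exists>Z. \<forall>A. Hom X Z A = {\<one>\<^bsub>HomG X Z A\<^esub>} \<and> Hom X A Z = {\<one>\<^bsub>HomG X A Z\<^esub>}) \<and>
    (\<forall>A B. \<exists>P iA iB pA pB. is_biprod X A B P iA iB pA pB)"

definition ET1 :: "('o,'m,'e) etcat \<Rightarrow> bool" where
  "ET1 X \<longleftrightarrow>
    (\<forall>C A. comm_group (ExtG X C A)) \<and>
    (\<forall>C C' A A' c a. c \<in> Hom X C' C \<longrightarrow> a \<in> Hom X A A' \<longrightarrow>
        Emap X c a \<in> hom (ExtG X C A) (ExtG X C' A')) \<and>
    (\<forall>C A d. d \<in> Ext X C A \<longrightarrow> Emap X (Ide X C) (Ide X A) d = d) \<and>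
    (\<forall>C C' C'' A A' A'' c c' a a' d. c \<in> Hom X C' C \<longrightarrow> c' \<in> Hom X C'' C' \<longrightarrow>
        a \<in> Hom X A A' \<longrightarrow> a' \<in> Hom X A' A'' \<longrightarrow> d \<in> Ext X C A \<longrightarrow>
        Emap X (Comp X c c') (Comp X a' a) d = Emap X c' a' (Emap X c a d)) \<and>
    (\<forall>C C' A c1 c2 d. c1 \<in> Hom X C' C \<longrightarrow> c2 \<in> Hom X C' C \<longrightarrow> d \<in> Ext X C A \<longrightarrow>
        Emap X (c1 \<otimes>\<^bsub>HomG X C' C\<^esub> c2) (Ide X A) d =
        Emap X c1 (Ide X A) d \<otimes>\<^bsub>ExtG X C' A\<^esub> Emap X c2 (Ide X A) d) \<and>
    (\<forall>C A A' a1 a2 d. a1 \<in> Hom X A A' \<longrightarrow> a2 \<in> Hom X A A' \<longrightarrow> d \<in> Ext X C A \<longrightarrow>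
        Emap X (Ide X C) (a1 \<otimes>\<^bsub>HomG X A A'\<^esub> a2) d =
        Emap X (Ide X C) a1 d \<otimes>\<^bsub>ExtG X C A'\<^esub> Emap X (Ide X C) a2 d)"

definition ET2 :: "('o,'m,'e) etcat \<Rightarrow> bool" where
  "ET2 X \<longleftrightarrow>
    (\<forall>C A d x y. Rlz X C A d x y \<longrightarrow>
        d \<in> Ext X C A \<and> x \<in> Hom X A (Cod X x) \<and> y \<in> Hom X (Cod X x) C) \<and>
    (\<forall>C A d. d \<in> Ext X C A \<longrightarrow> (\<exists>x y. Rlz X C A d x y)) \<and>
    (\<forall>C A d x y x' y'. Rlz X C A d x y \<longrightarrow>
        (Rlz X C A d x' y' \<longleftrightarrow> seq_equiv X A C x y x' y')) \<and>
    (\<forall>C A C' A' d d' x y x' y' a c. Rlz X C A d x y \<longrightarrow> Rlz X C' A' d' x' y' \<longrightarrow>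
        a \<in> Hom X A A' \<longrightarrow> c \<in> Hom X C C' \<longrightarrow> push X C a d = pull X A' c d' \<longrightarrow>
        (\<exists>b. b \<in> Hom X (Cod X x) (Cod X x') \<and>
             Comp X b x = Comp X x' a \<and> Comp X y' b = Comp X c y)) \<and>
    (\<forall>A C P iA iC pA pC. is_biprod X A C P iA iC pA pC \<longrightarrow>
        Rlz X C A \<one>\<^bsub>ExtG X C A\<^esub> iA pC) \<and>
    (\<forall>C A C' A' d d' x y x' y' PA iA iA' pA pA' PB jB jB' qB qB' PC kC kC' rC rC' t.
        Rlz X C A d x y \<longrightarrow> Rlz X C' A' d' x' y' \<longrightarrow>
        is_biprod X A A' PA iA iA' pA pA' \<longrightarrow>
        is_biprod X (Cod X x) (Cod X x') PB jB jB' qB qB' \<longrightarrow>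
        is_biprod X C C' PC kC kC' rC rC' \<longrightarrow>
        t \<in> Ext X PC PA \<longrightarrow>
        Emap X kC pA t = d \<longrightarrow> Emap X kC' pA' t = d' \<longrightarrow>
        Emap X kC pA' t = \<one>\<^bsub>ExtG X C A'\<^esub> \<longrightarrow> Emap X kC' pA t = \<one>\<^bsub>ExtG X C' A\<^esub> \<longrightarrow>
        Rlz X PC PA t
          (Comp X jB (Comp X x pA) \<otimes>\<^bsub>HomG X PA PB\<^esub> Comp X jB' (Comp X x' pA'))
          (Comp X kC (Comp X y qB) \<otimes>\<^bsub>HomG X PB PC\<^esub> Comp X kC' (Comp X y' qB')))"

definition ET12 :: "('o,'m,'e) etcat \<Rightarrow> bool" where
  "ET12 X \<longleftrightarrow> additive_cat X \<and> ET1 X \<and> ET2 X"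

definition is_ideal :: "('o,'m,'e) etcat \<Rightarrow> ('o \<Rightarrow> 'o \<Rightarrow> 'm set) \<Rightarrow> bool" where
  "is_ideal X I \<longleftrightarrow>
    (\<forall>A B. I A B \<subseteq> Hom X A B \<and> \<one>\<^bsub>HomG X A B\<^esub> \<in> I A B \<and>
        (\<forall>f\<in>I A B. \<forall>g\<in>I A B. f \<otimes>\<^bsub>HomG X A B\<^esub> g \<in> I A B)) \<and>
    (\<forall>A B C D f g h. f \<in> Hom X A B \<longrightarrow> g \<in> I B C \<longrightarrow> h \<in> Hom X C D \<longrightarrow>
        Comp X h (Comp X g f) \<in> I A D)"

definition perpE :: "('o,'m,'e) etcat \<Rightarrow> ('o \<Rightarrow> 'o \<Rightarrow> 'm set) \<Rightarrow> 'o \<Rightarrow> 'o \<Rightarrow> 'm set" where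
  "perpE X I A Y = {g \<in> Hom X A Y. \<forall>Xo C m d. m \<in> I Xo C \<longrightarrow> d \<in> Ext X C A \<longrightarrow>
      pull X Y m (push X C g d) = \<one>\<^bsub>ExtG X Xo Y\<^esub>}"

definition Obj :: "('o,'m,'e) etcat \<Rightarrow> ('o \<Rightarrow> 'o \<Rightarrow> 'm set) \<Rightarrow> 'o set" where
  "Obj X K = {A. Ide X A \<in> K A A}"

definition gen_ideal :: "('o,'m,'e) etcat \<Rightarrow> ('o \<Rightarrow> 'o \<Rightarrow> 'm set) \<Rightarrow> 'o \<Rightarrow> 'o \<Rightarrow> 'm set" where
  "gen_ideal X K A B = {f. \<forall>J. is_ideal X J \<longrightarrow> (\<forall>A' B'. K A' B' \<subseteq> J A' B') \<longrightarrow> f \<in> J A B}"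

definition ids_of :: "('o,'m,'e) etcat \<Rightarrow> 'o set \<Rightarrow> 'o \<Rightarrow> 'o \<Rightarrow> 'm set" where
  "ids_of X S A B = (if A = B \<and> A \<in> S then {Ide X A} else {})"

definition object_ideal :: "('o,'m,'e) etcat \<Rightarrow> ('o \<Rightarrow> 'o \<Rightarrow> 'm set) \<Rightarrow> bool" where
  "object_ideal X K \<longleftrightarrow> K = gen_ideal X (ids_of X (Obj X K))"

definition special_precover :: "('o,'m,'e) etcat \<Rightarrow> ('o \<Rightarrow> 'o \<Rightarrow> 'm set) \<Rightarrow> 'o \<Rightarrow> 'o \<Rightarrow> 'm \<Rightarrow> bool" where
  "special_precover X I C Xo i \<longleftrightarrow> i \<in> I Xo C \<and>
     (\<exists>A A' d d' x y x' j b.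
        Rlz X C A d x y \<and> Rlz X C A' d' x' i \<and>
        j \<in> Hom X A A' \<and> b \<in> Hom X (Cod X x) Xo \<and>
        Comp X b x = Comp X x' j \<and> Comp X i b = Comp X (Ide X C) y \<and>
        push X C j d = pull X A' (Ide X C) d' \<and>
        j \<in> perpE X I A A')"

definition special_precovering :: "('o,'m,'e) etcat \<Rightarrow> ('o \<Rightarrow> 'o \<Rightarrow> 'm set) \<Rightarrow> bool" where
  "special_precovering X I \<longleftrightarrow> (\<forall>C. \<exists>Xo i. special_precover X I C Xo i)"

definition object_special_precover :: "('o,'m,'e) etcat \<Rightarrow> ('o \<Rightarrow> 'o \<Rightarrow> 'm set) \<Rightarrow> 'o \<Rightarrow> 'o \<Rightarrow> 'm \<Rightarrow> bool" where
  "object_special_precover X I C Xo i \<longleftrightarrow> i \<in> I Xo C \<and>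
     (\<exists>A x d. Rlz X C A d x i \<and> A \<in> Obj X (perpE X I))"

definition object_special_precovering :: "('o,'m,'e) etcat \<Rightarrow> ('o \<Rightarrow> 'o \<Rightarrow> 'm set) \<Rightarrow> bool" where
  "object_special_precovering X I \<longleftrightarrow> (\<forall>C. \<exists>Xo i. object_special_precover X I C Xo i)"

end

theory Submission
  imports Defs
begin

text \<open>A special \<open>\<I>\<close>-precover \<open>i : X \<rightarrow> C\<close> comes with \<open>j : A \<rightarrow> A'\<close> in
  \<open>\<I>\<^sup>\<perp>\<close> and \<open>j\<^sub>\<star>\<delta> = \<delta>'\<close>, where \<open>\<delta>'\<close> is realized by \<open>A' \<rightarrow> X \<rightarrow> C\<close>.
  The class \<open>\<I>\<^sup>\<perp>\<close> is itself an ideal, so its objects are closed under biproducts and the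
  morphisms factoring through them form an ideal; being an object ideal, \<open>\<I>\<^sup>\<perp>\<close> is
  contained in it, i.e. \<open>j = v u\<close> with \<open>u : A \<rightarrow> W\<close>, \<open>W \<in> \<I>\<^sup>\<perp>\<close>. Realizing
  \<open>u\<^sub>\<star>\<delta>\<close> by \<open>W \<rightarrow> Y \<rightarrow> C\<close>, the equation \<open>v\<^sub>\<star>(u\<^sub>\<star>\<delta>) = \<delta>'\<close> yields a
  morphism of \<open>\<EE>\<close>-triangles that is the identity on \<open>C\<close>, so the deflation \<open>Y \<rightarrow> C\<close>
  factors through \<open>i\<close> and hence lies in \<open>\<I>\<close>.\<close>

lemma ideal_hom: "is_ideal X I \<Longrightarrow> f \<in> I A B \<Longrightarrow> f \<in> Hom X A B"
  unfolding is_ideal_def by blast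

lemma (in group) idempotent_eq_one: "x \<in> carrier G \<Longrightarrow> x \<otimes> x = x \<Longrightarrow> x = \<one>"
  using l_cancel_one[of x x] by blast

locale additive_category =
  fixes X :: "('o,'m,'e) etcat"
  assumes additive: "additive_cat X"
begin

lemma hom_comm_group: "comm_group (HomG X A B)"
  using additive unfolding additive_cat_def by simp

lemma hom_group: "group (HomG X A B)"
  using hom_comm_group by (rule comm_group.axioms(2))

lemma zero_closed: "\<one>\<^bsub>HomG X A B\<^esub> \<in> Hom X A B"
  by (rule monoid.one_closed[OF group.is_monoid[OF hom_group]])

lemma add_closed: "f \<in> Hom X A B \<Longrightarrow> g \<in> Hom X A B \<Longrightarrow> f \<otimes>\<^bsub>HomG X A B\<^esub> g \<in> Hom X A B"
  by (rule monoid.m_closed[OF group.is_monoid[OF hom_group]])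

lemma comp_closed: "f \<in> Hom X A B \<Longrightarrow> g \<in> Hom X B C \<Longrightarrow> Comp X g f \<in> Hom X A C"
  using additive unfolding additive_cat_def by simp

lemma comp_assoc:
  "f \<in> Hom X A B \<Longrightarrow> g \<in> Hom X B C \<Longrightarrow> h \<in> Hom X C D \<Longrightarrow>
    Comp X h (Comp X g f) = Comp X (Comp X h g) f"
  using additive unfolding additive_cat_def by simp

lemma ide_closed: "Ide X A \<in> Hom X A A"
  using additive unfolding additive_cat_def by simp

lemma comp_ide_left: "f \<in> Hom X A B \<Longrightarrow> Comp X (Ide X B) f = f"
  using additive unfolding additive_cat_def by simp

lemma comp_ide_right: "f \<in> Hom X A B \<Longrightarrow> Comp X f (Ide X A) = f"
  using additive unfolding additive_cat_def by simp

lemma comp_add_left: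
  "f \<in> Hom X A B \<Longrightarrow> g \<in> Hom X B C \<Longrightarrow> g' \<in> Hom X B C \<Longrightarrow>
    Comp X (g \<otimes>\<^bsub>HomG X B C\<^esub> g') f = Comp X g f \<otimes>\<^bsub>HomG X A C\<^esub> Comp X g' f"
  using additive unfolding additive_cat_def by simp

lemma comp_add_right:
  "f \<in> Hom X A B \<Longrightarrow> f' \<in> Hom X A B \<Longrightarrow> g \<in> Hom X B C \<Longrightarrow>
    Comp X g (f \<otimes>\<^bsub>HomG X A B\<^esub> f') = Comp X g f \<otimes>\<^bsub>HomG X A C\<^esub> Comp X g f'"
  using additive unfolding additive_cat_def by simp

lemma hom_dom: "f \<in> Hom X A B \<Longrightarrow> Dom X f = A"
  using additive unfolding additive_cat_def by simp

lemma zero_object_exists: "\<exists>Z. \<forall>A. Hom X Z A = {\<one>\<^bsub>HomG X Z A\<^esub>} \<and> Hom X A Z = {\<one>\<^bsub>HomG X A Z\<^esub>}"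
  using additive unfolding additive_cat_def by simp

lemma biprod_exists: "\<exists>P iA iB pA pB. is_biprod X A B P iA iB pA pB"
  using additive unfolding additive_cat_def by simp

lemma hom_add_comm:
  "f \<in> Hom X A B \<Longrightarrow> g \<in> Hom X A B \<Longrightarrow> f \<otimes>\<^bsub>HomG X A B\<^esub> g = g \<otimes>\<^bsub>HomG X A B\<^esub> f"
  by (rule comm_monoid.m_comm[OF comm_group.axioms(1)[OF hom_comm_group]])

lemma comp_zero_right:
  assumes v: "v \<in> Hom X B C"
  shows "Comp X v \<one>\<^bsub>HomG X A B\<^esub> = \<one>\<^bsub>HomG X A C\<^esub>"
proof -
  let ?z = "\<one>\<^bsub>HomG X A B\<^esub>"
  have "Comp X v ?z = Comp X v (?z \<otimes>\<^bsub>HomG X A B\<^esub> ?z)"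
    using hom_group zero_closed by (simp add: group.is_monoid monoid.l_one)
  also have "\<dots> = Comp X v ?z \<otimes>\<^bsub>HomG X A C\<^esub> Comp X v ?z"
    using comp_add_right zero_closed v by blast
  finally show ?thesis
    using group.idempotent_eq_one[OF hom_group comp_closed[OF zero_closed v]] by simp
qed

lemma biprod_proj_inj_zero:
  assumes b: "is_biprod X W1 W2 P i1 i2 p1 p2"
  shows "Comp X p2 i1 = \<one>\<^bsub>HomG X W1 W2\<^esub>"
proof -
  from b have h: "i1 \<in> Hom X W1 P" "i2 \<in> Hom X W2 P" "p1 \<in> Hom X P W1" "p2 \<in> Hom X P W2"
    "Comp X p1 i1 = Ide X W1" "Comp X p2 i2 = Ide X W2"
    "Comp X i1 p1 \<otimes>\<^bsub>HomG X P P\<^esub> Comp X i2 p2 = Ide X P"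
    unfolding is_biprod_def by auto
  define x where "x = Comp X p2 i1"
  have x: "x \<in> Hom X W1 W2" using h comp_closed x_def by blast
  have "i1 = Comp X (Comp X i1 p1 \<otimes>\<^bsub>HomG X P P\<^esub> Comp X i2 p2) i1"
    using h(7) comp_ide_left[OF h(1)] by simp
  also have "\<dots> = Comp X i1 (Comp X p1 i1) \<otimes>\<^bsub>HomG X W1 P\<^esub> Comp X i2 (Comp X p2 i1)"
    using comp_add_left[OF h(1) comp_closed[OF h(3) h(1)] comp_closed[OF h(4) h(2)]]
      comp_assoc[OF h(1) h(3) h(1)] comp_assoc[OF h(1) h(4) h(2)] by simp
  also have "\<dots> = i1 \<otimes>\<^bsub>HomG X W1 P\<^esub> Comp X i2 x"
    using h(5) comp_ide_right[OF h(1)] x_def by simp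
  finally have "x = Comp X p2 (i1 \<otimes>\<^bsub>HomG X W1 P\<^esub> Comp X i2 x)"
    using x_def by simp
  also have "\<dots> = x \<otimes>\<^bsub>HomG X W1 W2\<^esub> Comp X (Comp X p2 i2) x"
    using comp_add_right[OF h(1) comp_closed[OF x h(2)] h(4)] comp_assoc[OF x h(2) h(4)] x_def
    by simp
  also have "\<dots> = x \<otimes>\<^bsub>HomG X W1 W2\<^esub> x"
    using h(6) comp_ide_left[OF x] by simp
  finally show ?thesis
    using group.idempotent_eq_one[OF hom_group x] x_def by simp
qed

lemma biprod_swap: "is_biprod X W1 W2 P i1 i2 p1 p2 \<Longrightarrow> is_biprod X W2 W1 P i2 i1 p2 p1"
  unfolding is_biprod_def using hom_add_comm comp_closed by auto

lemma biprod_copair_inj: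
  assumes b: "is_biprod X W1 W2 P i1 i2 p1 p2"
    and v1: "v1 \<in> Hom X W1 B" and v2: "v2 \<in> Hom X W2 B"
  shows "Comp X (Comp X v1 p1 \<otimes>\<^bsub>HomG X P B\<^esub> Comp X v2 p2) i1 = v1"
proof -
  from b have h: "i1 \<in> Hom X W1 P" "p1 \<in> Hom X P W1" "p2 \<in> Hom X P W2"
    "Comp X p1 i1 = Ide X W1"
    unfolding is_biprod_def by auto
  have "Comp X (Comp X v1 p1 \<otimes>\<^bsub>HomG X P B\<^esub> Comp X v2 p2) i1
      = Comp X v1 (Comp X p1 i1) \<otimes>\<^bsub>HomG X W1 B\<^esub> Comp X v2 (Comp X p2 i1)"
    using comp_add_left[OF h(1) comp_closed[OF h(2) v1] comp_closed[OF h(3) v2]]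
      comp_assoc[OF h(1) h(2) v1] comp_assoc[OF h(1) h(3) v2] by simp
  also have "\<dots> = v1 \<otimes>\<^bsub>HomG X W1 B\<^esub> \<one>\<^bsub>HomG X W1 B\<^esub>"
    using h(4) comp_ide_right[OF v1] biprod_proj_inj_zero[OF b] comp_zero_right[OF v2] by simp
  finally show ?thesis
    using v1 hom_group by (simp add: group.is_monoid monoid.r_one)
qed

lemma Obj_ideal_zero_object:
  assumes "is_ideal X K" and "Hom X Z Z = {\<one>\<^bsub>HomG X Z Z\<^esub>}"
  shows "Z \<in> Obj X K"
proof -
  have "Ide X Z = \<one>\<^bsub>HomG X Z Z\<^esub>"
    using assms(2) ide_closed by blast
  then show ?thesis
    using assms(1) unfolding is_ideal_def Obj_def by simp
qed

lemma Obj_ideal_biprod: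
  assumes K: "is_ideal X K" and b: "is_biprod X W1 W2 P i1 i2 p1 p2"
    and W1: "W1 \<in> Obj X K" and W2: "W2 \<in> Obj X K"
  shows "P \<in> Obj X K"
proof -
  from b have h: "i1 \<in> Hom X W1 P" "i2 \<in> Hom X W2 P" "p1 \<in> Hom X P W1" "p2 \<in> Hom X P W2"
    "Comp X i1 p1 \<otimes>\<^bsub>HomG X P P\<^esub> Comp X i2 p2 = Ide X P"
    unfolding is_biprod_def by auto
  have "Comp X i1 (Comp X (Ide X W1) p1) \<in> K P P" "Comp X i2 (Comp X (Ide X W2) p2) \<in> K P P"
    using K W1 W2 h unfolding is_ideal_def Obj_def by blast+
  then have "Comp X i1 p1 \<otimes>\<^bsub>HomG X P P\<^esub> Comp X i2 p2 \<in> K P P"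
    using K comp_ide_left[OF h(3)] comp_ide_left[OF h(4)] unfolding is_ideal_def by simp
  then show ?thesis
    using h(5) unfolding Obj_def by simp
qed

definition factors_through :: "'o set \<Rightarrow> 'o \<Rightarrow> 'o \<Rightarrow> 'm set" where
  "factors_through S A B =
     {f. \<exists>W\<in>S. \<exists>u\<in>Hom X A W. \<exists>v\<in>Hom X W B. f = Comp X v u}"

lemma factors_through_add:
  assumes b: "is_biprod X W1 W2 P i1 i2 p1 p2"
    and u1: "u1 \<in> Hom X A W1" and v1: "v1 \<in> Hom X W1 B"
    and u2: "u2 \<in> Hom X A W2" and v2: "v2 \<in> Hom X W2 B"
  shows "Comp X v1 u1 \<otimes>\<^bsub>HomG X A B\<^esub> Comp X v2 u2 =
    Comp X (Comp X v1 p1 \<otimes>\<^bsub>HomG X P B\<^esub> Comp X v2 p2)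
           (Comp X i1 u1 \<otimes>\<^bsub>HomG X A P\<^esub> Comp X i2 u2)"
proof -
  let ?V = "Comp X v1 p1 \<otimes>\<^bsub>HomG X P B\<^esub> Comp X v2 p2"
  from b have h: "i1 \<in> Hom X W1 P" "i2 \<in> Hom X W2 P" "p1 \<in> Hom X P W1" "p2 \<in> Hom X P W2"
    unfolding is_biprod_def by auto
  have V: "?V \<in> Hom X P B"
    using add_closed comp_closed h v1 v2 by blast
  have V2: "Comp X ?V i2 = v2"
    using biprod_copair_inj[OF biprod_swap[OF b] v2 v1]
      hom_add_comm[OF comp_closed[OF h(3) v1] comp_closed[OF h(4) v2]] by simp
  have "Comp X ?V (Comp X i1 u1 \<otimes>\<^bsub>HomG X A P\<^esub> Comp X i2 u2)
      = Comp X (Comp X ?V i1) u1 \<otimes>\<^bsub>HomG X A B\<^esub> Comp X (Comp X ?V i2) u2"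
    using comp_add_right[OF comp_closed[OF u1 h(1)] comp_closed[OF u2 h(2)] V]
      comp_assoc[OF u1 h(1) V] comp_assoc[OF u2 h(2) V] by simp
  then show ?thesis
    using biprod_copair_inj[OF b v1 v2] V2 by simp
qed

lemma factors_through_Obj_ideal:
  assumes K: "is_ideal X K"
  shows "is_ideal X (factors_through (Obj X K))"
  unfolding is_ideal_def
proof (intro conjI allI impI ballI)
  fix A B
  show "factors_through (Obj X K) A B \<subseteq> Hom X A B"
    unfolding factors_through_def using comp_closed by blast
  obtain Z where Z: "\<And>A. Hom X Z A = {\<one>\<^bsub>HomG X Z A\<^esub>} \<and> Hom X A Z = {\<one>\<^bsub>HomG X A Z\<^esub>}"
    using zero_object_exists by blast
  have "Z \<in> Obj X K" using Obj_ideal_zero_object K Z by blast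
  moreover have "\<one>\<^bsub>HomG X A B\<^esub> = Comp X \<one>\<^bsub>HomG X Z B\<^esub> \<one>\<^bsub>HomG X A Z\<^esub>"
    using comp_zero_right[OF zero_closed] by simp
  ultimately show "\<one>\<^bsub>HomG X A B\<^esub> \<in> factors_through (Obj X K) A B"
    unfolding factors_through_def using zero_closed by blast
next
  fix A B f g
  assume "f \<in> factors_through (Obj X K) A B" "g \<in> factors_through (Obj X K) A B"
  then obtain W1 u1 v1 W2 u2 v2 where
    W: "W1 \<in> Obj X K" "W2 \<in> Obj X K" and
    uv: "u1 \<in> Hom X A W1" "v1 \<in> Hom X W1 B" "u2 \<in> Hom X A W2" "v2 \<in> Hom X W2 B" and
    fg: "f = Comp X v1 u1" "g = Comp X v2 u2"
    unfolding factors_through_def by blast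
  obtain P i1 i2 p1 p2 where b: "is_biprod X W1 W2 P i1 i2 p1 p2"
    using biprod_exists by blast
  then have "i1 \<in> Hom X W1 P" "i2 \<in> Hom X W2 P" "p1 \<in> Hom X P W1" "p2 \<in> Hom X P W2"
    unfolding is_biprod_def by auto
  then show "f \<otimes>\<^bsub>HomG X A B\<^esub> g \<in> factors_through (Obj X K) A B"
    unfolding factors_through_def fg factors_through_add[OF b uv]
    using Obj_ideal_biprod[OF K b W] add_closed comp_closed uv by blast
next
  fix A B C D f g h
  assume f: "f \<in> Hom X A B" and g: "g \<in> factors_through (Obj X K) B C" and h: "h \<in> Hom X C D"
  then obtain W u v where W: "W \<in> Obj X K" and uv: "u \<in> Hom X B W" "v \<in> Hom X W C"
    and guv: "g = Comp X v u"
    unfolding factors_through_def by blast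
  have "Comp X h (Comp X g f) = Comp X (Comp X h g) f"
    using comp_assoc[OF f comp_closed[OF uv] h] guv by simp
  also have "\<dots> = Comp X (Comp X (Comp X h v) u) f"
    using comp_assoc[OF uv h] guv by simp
  also have "\<dots> = Comp X (Comp X h v) (Comp X u f)"
    using comp_assoc[OF f uv(1) comp_closed[OF uv(2) h]] by simp
  finally have "Comp X h (Comp X g f) = Comp X (Comp X h v) (Comp X u f)" .
  then show "Comp X h (Comp X g f) \<in> factors_through (Obj X K) A D"
    unfolding factors_through_def using W uv f h comp_closed by blast
qed

lemma object_ideal_factors_through:
  assumes K: "is_ideal X K" and "object_ideal X K"
  shows "K A B \<subseteq> factors_through (Obj X K) A B"
proof -
  have "Ide X W \<in> factors_through (Obj X K) W W" if "W \<in> Obj X K" for W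
    unfolding factors_through_def
  proof (intro CollectI bexI)
    show "Ide X W = Comp X (Ide X W) (Ide X W)"
      using comp_ide_left[OF ide_closed] by simp
  qed (use that ide_closed in auto)
  then have "ids_of X (Obj X K) A' B' \<subseteq> factors_through (Obj X K) A' B'" for A' B'
    unfolding ids_of_def by auto
  moreover have "K A B = gen_ideal X (ids_of X (Obj X K)) A B"
    using assms(2) unfolding object_ideal_def by simp
  ultimately show ?thesis
    using factors_through_Obj_ideal[OF K] unfolding gen_ideal_def by blast
qed

end

locale biadditive_extension = additive_category +
  assumes ET1: "ET1 X"
begin

lemma Emap_hom:
  "c \<in> Hom X C' C \<Longrightarrow> a \<in> Hom X A A' \<Longrightarrow> Emap X c a \<in> hom (ExtG X C A) (ExtG X C' A')"
  using ET1 unfolding ET1_def by simp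

lemma Emap_ide: "d \<in> Ext X C A \<Longrightarrow> Emap X (Ide X C) (Ide X A) d = d"
  using ET1 unfolding ET1_def by simp

lemma Emap_comp:
  "c \<in> Hom X C' C \<Longrightarrow> c' \<in> Hom X C'' C' \<Longrightarrow> a \<in> Hom X A A' \<Longrightarrow> a' \<in> Hom X A' A'' \<Longrightarrow>
    d \<in> Ext X C A \<Longrightarrow> Emap X (Comp X c c') (Comp X a' a) d = Emap X c' a' (Emap X c a d)"
  using ET1 unfolding ET1_def by simp

lemma push_add:
  "a1 \<in> Hom X A A' \<Longrightarrow> a2 \<in> Hom X A A' \<Longrightarrow> d \<in> Ext X C A \<Longrightarrow>
    push X C (a1 \<otimes>\<^bsub>HomG X A A'\<^esub> a2) d = push X C a1 d \<otimes>\<^bsub>ExtG X C A'\<^esub> push X C a2 d"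
  using ET1 unfolding ET1_def push_def by simp

lemma ext_group: "group (ExtG X C A)"
  using ET1 unfolding ET1_def by (simp add: comm_group.axioms(2))

lemma Emap_closed:
  "c \<in> Hom X C' C \<Longrightarrow> a \<in> Hom X A A' \<Longrightarrow> d \<in> Ext X C A \<Longrightarrow> Emap X c a d \<in> Ext X C' A'"
  using Emap_hom by (rule hom_in_carrier)

lemma Emap_mult:
  "c \<in> Hom X C' C \<Longrightarrow> a \<in> Hom X A A' \<Longrightarrow> d \<in> Ext X C A \<Longrightarrow> d' \<in> Ext X C A \<Longrightarrow>
    Emap X c a (d \<otimes>\<^bsub>ExtG X C A\<^esub> d') = Emap X c a d \<otimes>\<^bsub>ExtG X C' A'\<^esub> Emap X c a d'"
  using Emap_hom by (rule hom_mult)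

lemma Emap_one:
  assumes "c \<in> Hom X C' C" and "a \<in> Hom X A A'"
  shows "Emap X c a \<one>\<^bsub>ExtG X C A\<^esub> = \<one>\<^bsub>ExtG X C' A'\<^esub>"
proof -
  interpret group_hom "ExtG X C A" "ExtG X C' A'" "Emap X c a"
    using assms Emap_hom ext_group unfolding group_hom_def group_hom_axioms_def by blast
  show ?thesis by (rule hom_one)
qed

lemma push_closed: "a \<in> Hom X A A' \<Longrightarrow> d \<in> Ext X C A \<Longrightarrow> push X C a d \<in> Ext X C A'"
  unfolding push_def using Emap_closed ide_closed by blast

lemma pull_ide: "d \<in> Ext X C A \<Longrightarrow> pull X A (Ide X C) d = d"
  unfolding pull_def by (rule Emap_ide)

lemma push_zero:
  assumes d: "d \<in> Ext X C A"
  shows "push X C \<one>\<^bsub>HomG X A A'\<^esub> d = \<one>\<^bsub>ExtG X C A'\<^esub>"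
proof -
  let ?z = "\<one>\<^bsub>HomG X A A'\<^esub>"
  have "push X C ?z d = push X C (?z \<otimes>\<^bsub>HomG X A A'\<^esub> ?z) d"
    using hom_group zero_closed by (simp add: group.is_monoid monoid.l_one)
  also have "\<dots> = push X C ?z d \<otimes>\<^bsub>ExtG X C A'\<^esub> push X C ?z d"
    using push_add zero_closed d by blast
  finally show ?thesis
    using group.idempotent_eq_one[OF ext_group push_closed[OF zero_closed d]] by simp
qed

lemma push_comp:
  "f \<in> Hom X A B \<Longrightarrow> g \<in> Hom X B D \<Longrightarrow> d \<in> Ext X C A \<Longrightarrow>
    push X C (Comp X g f) d = push X C g (push X C f d)"
  unfolding push_def using Emap_comp[OF ide_closed ide_closed] comp_ide_left[OF ide_closed] by simp

lemma pull_push: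
  assumes m: "m \<in> Hom X C' C" and g: "g \<in> Hom X A A'" and d: "d \<in> Ext X C A"
  shows "pull X A' m (push X C g d) = push X C' g (pull X A m d)"
proof -
  have "pull X A' m (push X C g d) = Emap X (Comp X (Ide X C) m) (Comp X (Ide X A') g) d"
    unfolding push_def pull_def using Emap_comp[OF ide_closed m g ide_closed d] by simp
  also have "\<dots> = Emap X (Comp X m (Ide X C')) (Comp X g (Ide X A)) d"
    using comp_ide_left[OF m] comp_ide_left[OF g] comp_ide_right[OF m] comp_ide_right[OF g]
    by simp
  also have "\<dots> = push X C' g (pull X A m d)"
    unfolding push_def pull_def using Emap_comp[OF m ide_closed ide_closed g d] by simp
  finally show ?thesis .
qed

lemma perpE_ideal:
  assumes I: "is_ideal X I"
  shows "is_ideal X (perpE X I)"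
  unfolding is_ideal_def
proof (intro conjI allI impI ballI)
  fix A B
  show "perpE X I A B \<subseteq> Hom X A B"
    unfolding perpE_def by blast
  have "pull X B m (push X C \<one>\<^bsub>HomG X A B\<^esub> d) = \<one>\<^bsub>ExtG X Xo B\<^esub>"
    if "m \<in> I Xo C" "d \<in> Ext X C A" for Xo C m d
    using push_zero[OF that(2)] Emap_one[OF ideal_hom[OF I that(1)] ide_closed]
    unfolding pull_def by simp
  then show "\<one>\<^bsub>HomG X A B\<^esub> \<in> perpE X I A B"
    unfolding perpE_def using zero_closed by blast
next
  fix A B f g
  assume f: "f \<in> perpE X I A B" and g: "g \<in> perpE X I A B"
  show "f \<otimes>\<^bsub>HomG X A B\<^esub> g \<in> perpE X I A B"
    unfolding perpE_def
  proof (intro CollectI conjI allI impI)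
    show "f \<otimes>\<^bsub>HomG X A B\<^esub> g \<in> Hom X A B"
      using f g add_closed unfolding perpE_def by blast
    fix Xo C m d
    assume m: "m \<in> I Xo C" and d: "d \<in> Ext X C A"
    have fg: "f \<in> Hom X A B" "g \<in> Hom X A B"
      using f g unfolding perpE_def by auto
    have "pull X B m (push X C (f \<otimes>\<^bsub>HomG X A B\<^esub> g) d)
        = pull X B m (push X C f d) \<otimes>\<^bsub>ExtG X Xo B\<^esub> pull X B m (push X C g d)"
      unfolding push_add[OF fg d] pull_def
      using Emap_mult ideal_hom[OF I m] ide_closed push_closed fg d by blast
    also have "\<dots> = \<one>\<^bsub>ExtG X Xo B\<^esub> \<otimes>\<^bsub>ExtG X Xo B\<^esub> \<one>\<^bsub>ExtG X Xo B\<^esub>"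
      using f g m d unfolding perpE_def by simp
    finally show "pull X B m (push X C (f \<otimes>\<^bsub>HomG X A B\<^esub> g) d) = \<one>\<^bsub>ExtG X Xo B\<^esub>"
      using ext_group by (simp add: group.is_monoid monoid.l_one)
  qed
next
  fix A B C D f g h
  assume f: "f \<in> Hom X A B" and g: "g \<in> perpE X I B C" and h: "h \<in> Hom X C D"
  have gh: "g \<in> Hom X B C"
    using g unfolding perpE_def by blast
  show "Comp X h (Comp X g f) \<in> perpE X I A D"
    unfolding perpE_def
  proof (intro CollectI conjI allI impI)
    show "Comp X h (Comp X g f) \<in> Hom X A D"
      using f gh h comp_closed by blast
    fix Xo C' m d
    assume m: "m \<in> I Xo C'" and d: "d \<in> Ext X C' A"
    have "pull X D m (push X C' (Comp X h (Comp X g f)) d)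
        = push X Xo h (pull X C m (push X C' g (push X C' f d)))"
      using push_comp[OF f gh d] push_comp[OF comp_closed[OF f gh] h d]
        pull_push[OF ideal_hom[OF I m] h push_closed[OF gh push_closed[OF f d]]] by simp
    also have "\<dots> = \<one>\<^bsub>ExtG X Xo D\<^esub>"
      using g m push_closed[OF f d] Emap_one[OF ide_closed h]
      unfolding perpE_def push_def by simp
    finally show "pull X D m (push X C' (Comp X h (Comp X g f)) d) = \<one>\<^bsub>ExtG X Xo D\<^esub>" .
  qed
qed

end

locale realized_extension = biadditive_extension +
  assumes ET2: "ET2 X"
begin

lemma realization_closed:
  "Rlz X C A d x y \<Longrightarrow> d \<in> Ext X C A \<and> x \<in> Hom X A (Cod X x) \<and> y \<in> Hom X (Cod X x) C"
  using conjunct1[OF ET2[unfolded ET2_def]] by blast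

lemma realization_exists: "d \<in> Ext X C A \<Longrightarrow> \<exists>x y. Rlz X C A d x y"
  using conjunct1[OF conjunct2[OF ET2[unfolded ET2_def]]] by blast

lemma realization_morphism:
  "Rlz X C A d x y \<Longrightarrow> Rlz X C' A' d' x' y' \<Longrightarrow>
    a \<in> Hom X A A' \<Longrightarrow> c \<in> Hom X C C' \<Longrightarrow> push X C a d = pull X A' c d' \<Longrightarrow>
    \<exists>b. b \<in> Hom X (Cod X x) (Cod X x') \<and> Comp X b x = Comp X x' a \<and> Comp X y' b = Comp X c y"
  using conjunct1[OF conjunct2[OF conjunct2[OF conjunct2[OF ET2[unfolded ET2_def]]]]] by blast

text \<open>The morphism of \<open>\<EE>\<close>-triangles \<open>(v, b, id\<^sub>C)\<close> given by (ET2) factors \<open>y\<close>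
  through \<open>i\<close>.\<close>
lemma deflation_mem_ideal_of_push:
  assumes I: "is_ideal X I"
    and r': "Rlz X C A' d' x' i" and i: "i \<in> I (Cod X x') C"
    and r: "Rlz X C W e x y" and v: "v \<in> Hom X W A'" and e: "push X C v e = d'"
  shows "y \<in> I (Cod X x) C"
proof -
  have "push X C v e = pull X A' (Ide X C) d'"
    using e pull_ide realization_closed[OF r'] by simp
  then obtain b where b: "b \<in> Hom X (Cod X x) (Cod X x')" and ib: "Comp X i b = Comp X (Ide X C) y"
    using realization_morphism[OF r r' v ide_closed] by blast
  have y: "y \<in> Hom X (Cod X x) C"
    using realization_closed[OF r] by blast
  have "Comp X (Ide X C) (Comp X i b) \<in> I (Cod X x) C"
    using I b i ide_closed unfolding is_ideal_def by blast
  then show ?thesis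
    using ib comp_ide_left[OF y] by simp
qed

lemma object_special_precover_of_special_precover:
  assumes I: "is_ideal X I" and perp: "object_ideal X (perpE X I)"
    and sp: "special_precover X I C Xo i"
  shows "\<exists>Xo' i'. object_special_precover X I C Xo' i'"
proof -
  obtain A A' d d' x y x' j where
    i: "i \<in> I Xo C" and r: "Rlz X C A d x y" and r': "Rlz X C A' d' x' i" and
    jd: "push X C j d = pull X A' (Ide X C) d'" and j: "j \<in> perpE X I A A'"
    using sp unfolding special_precover_def by blast
  have "Dom X i = Cod X x'" "Dom X i = Xo"
    using realization_closed[OF r'] ideal_hom[OF I i] hom_dom by blast+
  then have i': "i \<in> I (Cod X x') C"
    using i by simp
  obtain W u v where W: "W \<in> Obj X (perpE X I)" and u: "u \<in> Hom X A W" and v: "v \<in> Hom X W A'"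
    and juv: "j = Comp X v u"
    using object_ideal_factors_through[OF perpE_ideal[OF I] perp] j
    unfolding factors_through_def by blast
  have d: "d \<in> Ext X C A" and d': "d' \<in> Ext X C A'"
    using realization_closed[OF r] realization_closed[OF r'] by blast+
  define e where "e = push X C u d"
  have "push X C v e = d'"
    using jd juv push_comp[OF u v d] pull_ide[OF d'] unfolding e_def by simp
  moreover obtain x2 y2 where r2: "Rlz X C W e x2 y2"
    using realization_exists push_closed[OF u d] unfolding e_def by blast
  ultimately have "y2 \<in> I (Cod X x2) C"
    using deflation_mem_ideal_of_push[OF I r' i' r2 v] by blast
  then show ?thesis
    using r2 W unfolding object_special_precover_def by blast
qed

end

theorem proposition5p2:
  fixes X :: "('o,'m,'e) etcat" and I :: "'o \<Rightarrow> 'o \<Rightarrow> 'm set"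
  assumes "ET12 X"
    and "is_ideal X I"
    and "special_precovering X I"
    and "object_ideal X (perpE X I)"
  shows "object_special_precovering X I"
proof -
  interpret realized_extension X
    using assms(1) unfolding ET12_def
    by unfold_locales (simp_all add: additive_category_def)
  show ?thesis
    using assms(2-4) object_special_precover_of_special_precover
    unfolding special_precovering_def object_special_precovering_def by blast
qed

end
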